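(* Let $f\in\mathbb C[x,y]$ be a non-constant polynomial. Then there exists a polynomial $m\in\mathbb C[t]$ such that $m(f)$ belongs to the gradient ideal $(f_x,f_y)\subset\mathbb C[x,y]$, and such that $m(c)=0$ if and only if $c$ is a critical value of $f$. *)

theory Defs
  imports "HOL-Computational_Algebra.Polynomial"
begin

text \<open>C[x,y] is represented as (C[x])[y], i.e. type complex poly poly:
  f = sum_j p_j(x) y^j.\<close>

type_synonym bipoly = "complex poly poly"

definition eval2 :: "bipoly \<Rightarrow> complex \<Rightarrow> complex \<Rightarrow> complex" where
  "eval2 f a b = poly (map_poly (\<lambda>p. poly p a) f) b"

definition dx :: "bipoly \<Rightarrow> bipoly" where
  "dx f = map_poly pderiv f"

definition dy :: "bipoly \<Rightarrow> bipoly" where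
  "dy f = pderiv f"

definition const2 :: "complex \<Rightarrow> bipoly" where
  "const2 c = [:[:c:]:]"

definition subst_bipoly :: "complex poly \<Rightarrow> bipoly \<Rightarrow> bipoly" where
  "subst_bipoly m f = poly (map_poly const2 m) f"

definition in_gradient_ideal :: "bipoly \<Rightarrow> bipoly \<Rightarrow> bool" where
  "in_gradient_ideal g f \<longleftrightarrow> (\<exists>a b. g = a * dx f + b * dy f)"

definition critical_value :: "bipoly \<Rightarrow> complex \<Rightarrow> bool" where
  "critical_value f c \<longleftrightarrow>
     (\<exists>a b. eval2 (dx f) a b = 0 \<and> eval2 (dy f) a b = 0 \<and> eval2 f a b = c)"

end

theory Submission
  imports Defs "HOL-Computational_Algebra.Computational_Algebra"
    "HOL-Computational_Algebra.Field_as_Ring"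
begin

text \<open>Write g = gcd(f_x, f_y), f_x = g p and f_y = g q. Since p and q are coprime, a nonzero
  r(x) lies in (p, q). Over a root \<alpha> of r, the common zeros (\<alpha>, \<beta>) of p and q are the roots of
  gcd(p(\<alpha>, y), q(\<alpha>, y)), which lies in (p, q, x - \<alpha>), and so does the product of the
  f - f(\<alpha>, \<beta>). Multiplying over all roots \<alpha> and using that the product of the x - \<alpha> is a
  multiple of r gives m0 with m0(f) \<in> (p, q) whose roots are values of f at common zeros of p and q.

  Next, f is constant modulo every prime factor \<pi> of g. If \<pi> lies in C[x], it is associated to
  some x - \<alpha>, and f_y(\<alpha>, y) = 0 makes f(\<alpha>, y) constant. Otherwise \<pi> and f - t have no common
  factor as polynomials in y, so some nonzero r(x, t) satisfies \<pi> | r(x, f). The derivation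
  \<pi>_y \<partial>_x - \<pi>_x \<partial>_y preserves multiples of \<pi> and kills f modulo \<pi>; applying it repeatedly removes
  the dependence of r on x and leaves a nonzero P(t) with \<pi> | P(f), hence \<pi> | f - c for a root c
  of P. Thus g | m1(f) for m1 = \<Prod>(t - c_\<pi>), and m = m0 m1 has m(f) \<in> (g p, g q) = (f_x, f_y)
  and only critical values as roots; conversely m(f), being in the gradient ideal, vanishes at
  every critical point.\<close>

definition is_ring_hom :: "('a::comm_ring_1 \<Rightarrow> 'b::comm_ring_1) \<Rightarrow> bool" where
  "is_ring_hom h \<longleftrightarrow>
     (\<forall>a b. h (a + b) = h a + h b) \<and> (\<forall>a b. h (a * b) = h a * h b) \<and> h 1 = 1"

lemma is_ring_hom_add: "is_ring_hom h \<Longrightarrow> h (a + b) = h a + h b"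
  by (simp add: is_ring_hom_def)

lemma is_ring_hom_mult: "is_ring_hom h \<Longrightarrow> h (a * b) = h a * h b"
  by (simp add: is_ring_hom_def)

lemma is_ring_hom_1: "is_ring_hom h \<Longrightarrow> h 1 = 1"
  by (simp add: is_ring_hom_def)

lemma is_ring_hom_0: "is_ring_hom h \<Longrightarrow> h 0 = 0"
  using is_ring_hom_add[of h 0 0] by simp

lemma is_ring_hom_diff: "is_ring_hom h \<Longrightarrow> h (a - b) = h a - h b"
  using is_ring_hom_add[of h "a - b" b] by (simp add: eq_diff_eq)

lemma is_ring_hom_sum: "is_ring_hom h \<Longrightarrow> h (sum F A) = (\<Sum>x\<in>A. h (F x))"
  by (induction A rule: infinite_finite_induct) (auto simp: is_ring_hom_0 is_ring_hom_add)

lemma is_ring_hom_prod_mset: "is_ring_hom h \<Longrightarrow> h (\<Prod>x\<in>#M. F x) = (\<Prod>x\<in>#M. h (F x))"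
  by (induction M) (auto simp: is_ring_hom_1 is_ring_hom_mult)

lemma is_ring_hom_of_nat: "is_ring_hom h \<Longrightarrow> h (of_nat n) = of_nat n"
  by (induction n) (auto simp: is_ring_hom_1 is_ring_hom_add is_ring_hom_0)

lemma is_ring_hom_dvd: "is_ring_hom h \<Longrightarrow> a dvd b \<Longrightarrow> h a dvd h b"
  by (metis dvdE dvdI is_ring_hom_mult)

lemma is_ring_hom_comp: "is_ring_hom h \<Longrightarrow> is_ring_hom k \<Longrightarrow> is_ring_hom (\<lambda>x. k (h x))"
  by (simp add: is_ring_hom_def)

lemma is_ring_hom_poly: "is_ring_hom (\<lambda>p. poly p z)"
  by (simp add: is_ring_hom_def)

lemma is_ring_hom_const_poly: "is_ring_hom (\<lambda>c. [:c:])"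
  by (simp add: is_ring_hom_def)

lemma is_ring_hom_map_poly:
  assumes "is_ring_hom h"
  shows "is_ring_hom (map_poly h)"
proof -
  have h0: "h 0 = 0" using assms by (rule is_ring_hom_0)
  have "map_poly h (a + b) = map_poly h a + map_poly h b" for a b
    by (rule poly_eqI) (simp add: coeff_map_poly h0 is_ring_hom_add[OF assms])
  moreover have "map_poly h (a * b) = map_poly h a * map_poly h b" for a b
    by (rule poly_eqI)
      (simp add: coeff_map_poly h0 coeff_mult is_ring_hom_sum[OF assms] is_ring_hom_mult[OF assms])
  moreover have "map_poly h 1 = 1" using is_ring_hom_1[OF assms] by simp
  ultimately show ?thesis by (simp add: is_ring_hom_def)
qed

lemma is_ring_hom_poly_commute:
  assumes "is_ring_hom h"
  shows "h (poly P z) = poly (map_poly h P) (h z)"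
  by (induction P)
    (simp_all add: map_poly_pCons is_ring_hom_0[OF assms] is_ring_hom_add[OF assms]
      is_ring_hom_mult[OF assms])

lemma is_ring_hom_pderiv_commute:
  assumes "is_ring_hom h"
  shows "map_poly h (pderiv p) = pderiv (map_poly h p)"
  by (rule poly_eqI)
    (simp add: coeff_map_poly coeff_pderiv is_ring_hom_0[OF assms] is_ring_hom_mult[OF assms]
      is_ring_hom_of_nat[OF assms] del: of_nat_Suc)

lemma const_combination_if_no_common_factor:
  fixes p q :: "'a::{factorial_ring_gcd,semiring_gcd_mult_normalize} poly"
  assumes nz: "p \<noteq> 0 \<or> q \<noteq> 0"
    and common: "\<And>d. d dvd p \<Longrightarrow> d dvd q \<Longrightarrow> degree d = 0"
  obtains r a b where "r \<noteq> 0" and "a * p + b * q = [:r:]"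
proof -
  define S where "S = {h. h \<noteq> 0 \<and> (\<exists>a b. h = a * p + b * q)}"
  have "p = 1 * p + 0 * q" "q = 0 * p + 1 * q" by simp_all
  then have "p \<in> S \<or> q \<in> S" unfolding S_def using nz by blast
  then obtain h where hS: "h \<in> S" and hmin: "\<And>h'. h' \<in> S \<Longrightarrow> degree h \<le> degree h'"
    using ex_has_least_nat[of "\<lambda>h. h \<in> S" _ degree] by blast
  from hS obtain a b where h0: "h \<noteq> 0" and hab: "h = a * p + b * q" unfolding S_def by auto
  \<comment> \<open>Pseudo-division by a combination of minimal degree leaves the remainder zero.\<close>
  have "primitive_part h dvd p'" if p': "p' = p \<or> p' = q" for p'
  proof -
    obtain c k where c: "c \<noteq> 0" and ck: "smult c p' = h * k + pseudo_mod p' h"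
      using pseudo_mod(1)[OF h0, of p'] by blast
    have "pseudo_mod p' h = ([:c:] * (if p' = p then 1 else 0) - k * a) * p
                          + ([:c:] * (if p' = p then 0 else 1) - k * b) * q"
      using p' ck by (auto simp: hab algebra_simps eq_diff_eq)
    then have "pseudo_mod p' h = 0"
      using pseudo_mod(2)[OF h0, of p'] hmin[of "pseudo_mod p' h"] unfolding S_def by fastforce
    then have "h dvd smult c p'" using ck by simp
    moreover have "primitive_part h dvd h"
      by (metis content_times_primitive_part dvd_smult dvd_refl)
    ultimately have "fract_poly (primitive_part h) dvd smult (to_fract c) (fract_poly p')"
      by (metis dvd_trans fract_poly_dvd fract_poly_smult)
    then have "fract_poly (primitive_part h) dvd fract_poly p'"
      using c by (simp add: dvd_smult_iff)
    then show "primitive_part h dvd p'"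
      by (rule fract_poly_dvdD) (use h0 in simp)
  qed
  then have "degree (primitive_part h) = 0" using common by blast
  then have "degree h = 0" by simp
  then have "h = [:coeff h 0:]" and "coeff h 0 \<noteq> 0"
    using h0 by (auto simp: degree_0_id elim: degree_eq_zeroE)
  then show ?thesis using that hab by metis
qed

lemma prod_mset_dvd_prod_mset_pointwise:
  assumes "\<And>x. x \<in># M \<Longrightarrow> F x dvd G x"
  shows "(\<Prod>x\<in>#M. F x) dvd (\<Prod>x\<in>#M. G x)"
  using assms by (induction M) (auto intro: mult_dvd_mono)

lemma prod_proots_linear_factors:
  fixes p :: "complex poly"
  assumes "p \<noteq> 0"
  shows "(\<Prod>x\<in>#proots p. [:-x, 1:]) = smult (inverse (lead_coeff p)) p"
  using assms complex_poly_decompose_multiset[of p] by (metis leading_coeff_0_iff smult_smult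
    field_class.field_inverse smult_1_left)

lemma complex_poly_nonunit_root:
  fixes p :: "complex poly"
  assumes "p \<noteq> 0" and "\<not> is_unit p"
  obtains a where "poly p a = 0"
proof -
  have "\<not> (\<exists>a l. a \<noteq> 0 \<and> l = 0 \<and> p = pCons a l)"
    using assms by (auto simp: is_unit_const_poly_iff dvd_field_iff)
  then show ?thesis using fundamental_theorem_of_algebra_alt that by blast
qed

definition is_ideal :: "'a::comm_ring_1 set \<Rightarrow> bool" where
  "is_ideal I \<longleftrightarrow> 0 \<in> I \<and> (\<forall>a\<in>I. \<forall>b\<in>I. a + b \<in> I) \<and> (\<forall>a\<in>I. \<forall>c. c * a \<in> I)"

definition ideal_insert :: "'a::comm_ring_1 \<Rightarrow> 'a set \<Rightarrow> 'a set" where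
  "ideal_insert a I = {i + c * a | i c. i \<in> I}"

definition ideal_pair :: "'a::comm_ring_1 \<Rightarrow> 'a \<Rightarrow> 'a set" where
  "ideal_pair p q = {a * p + b * q | a b. True}"

lemma is_ideal_mult: "is_ideal I \<Longrightarrow> a \<in> I \<Longrightarrow> c * a \<in> I"
  by (simp add: is_ideal_def)

lemma is_ideal_ideal_pair: "is_ideal (ideal_pair p q)"
  unfolding is_ideal_def
proof (intro conjI ballI allI)
  show "0 \<in> ideal_pair p q"
    unfolding ideal_pair_def by (auto intro!: exI[of _ 0])
next
  fix x y assume "x \<in> ideal_pair p q" "y \<in> ideal_pair p q"
  then obtain a b a' b' where "x = a * p + b * q" "y = a' * p + b' * q"
    unfolding ideal_pair_def by blast
  then have "x + y = (a + a') * p + (b + b') * q" by (simp add: algebra_simps)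
  then show "x + y \<in> ideal_pair p q" unfolding ideal_pair_def by blast
next
  fix x c assume "x \<in> ideal_pair p q"
  then obtain a b where "x = a * p + b * q" unfolding ideal_pair_def by blast
  then have "c * x = (c * a) * p + (c * b) * q" by (simp add: algebra_simps)
  then show "c * x \<in> ideal_pair p q" unfolding ideal_pair_def by blast
qed

lemma is_ideal_ideal_insert:
  assumes I: "is_ideal I"
  shows "is_ideal (ideal_insert a I)"
  unfolding is_ideal_def
proof (intro conjI ballI allI)
  have "0 = 0 + 0 * a" "0 \<in> I" using I by (simp_all add: is_ideal_def)
  then show "0 \<in> ideal_insert a I" unfolding ideal_insert_def by blast
next
  fix x y assume "x \<in> ideal_insert a I" "y \<in> ideal_insert a I"
  then obtain i c j d where "x = i + c * a" "y = j + d * a" "i \<in> I" "j \<in> I"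
    unfolding ideal_insert_def by blast
  moreover from this have "x + y = (i + j) + (c + d) * a" by (simp add: algebra_simps)
  ultimately show "x + y \<in> ideal_insert a I"
    using I unfolding ideal_insert_def is_ideal_def by blast
next
  fix x e assume "x \<in> ideal_insert a I"
  then obtain i c where "x = i + c * a" "i \<in> I" unfolding ideal_insert_def by blast
  moreover from this have "e * x = e * i + (e * c) * a" by (simp add: algebra_simps)
  ultimately show "e * x \<in> ideal_insert a I"
    using I unfolding ideal_insert_def is_ideal_def by blast
qed

lemma multiple_mem_ideal_insert: "is_ideal I \<Longrightarrow> c * a \<in> ideal_insert a I"
  unfolding ideal_insert_def is_ideal_def by force

lemma mult_mem_ideal_insert:
  assumes "is_ideal I" "h \<in> ideal_insert a I" "k \<in> ideal_insert b I"
  shows "h * k \<in> ideal_insert (a * b) I"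
proof -
  obtain i c where h: "h = i + c * a" "i \<in> I" using assms(2) unfolding ideal_insert_def by auto
  obtain j d where k: "k = j + d * b" "j \<in> I" using assms(3) unfolding ideal_insert_def by auto
  have "h * k = (k * i + (c * a) * j) + (c * d) * (a * b)"
    by (simp add: h k algebra_simps)
  moreover have "k * i + (c * a) * j \<in> I" using assms(1) h k unfolding is_ideal_def by blast
  ultimately show ?thesis unfolding ideal_insert_def by blast
qed

lemma prod_mset_mem_ideal_insert:
  assumes "is_ideal I" "\<And>x. x \<in># M \<Longrightarrow> F x \<in> ideal_insert (G x) I"
  shows "(\<Prod>x\<in>#M. F x) \<in> ideal_insert (\<Prod>x\<in>#M. G x) I"
  using assms(2)
proof (induction M)
  case empty
  show ?case using multiple_mem_ideal_insert[OF assms(1), of 1 1] by simp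
next
  case (add x M)
  then show ?case using mult_mem_ideal_insert[OF assms(1)] by simp
qed

lemma ideal_insert_absorb:
  assumes I: "is_ideal I" and "a \<in> I" and "h \<in> ideal_insert a I"
  shows "h \<in> I"
proof -
  obtain i c where "h = i + c * a" "i \<in> I" using assms(3) unfolding ideal_insert_def by blast
  with I \<open>a \<in> I\<close> show ?thesis unfolding is_ideal_def by simp
qed

abbreviation eval_x :: "complex \<Rightarrow> bipoly \<Rightarrow> complex poly" where
  "eval_x \<alpha> \<equiv> map_poly (\<lambda>c. poly c \<alpha>)"

abbreviation const_x :: "complex poly \<Rightarrow> bipoly" where
  "const_x \<equiv> map_poly (\<lambda>c. [:c:])"

abbreviation x_minus :: "complex \<Rightarrow> bipoly" where
  "x_minus \<alpha> \<equiv> [:[:-\<alpha>, 1:]:]"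

lemma is_ring_hom_eval_x: "is_ring_hom (eval_x \<alpha>)"
  by (rule is_ring_hom_map_poly[OF is_ring_hom_poly])

lemma is_ring_hom_const_x: "is_ring_hom const_x"
  by (rule is_ring_hom_map_poly[OF is_ring_hom_const_poly])

lemma is_ring_hom_const2: "is_ring_hom const2"
  by (simp add: is_ring_hom_def const2_def pCons_one)

lemma is_ring_hom_eval2: "is_ring_hom (\<lambda>h. eval2 h a b)"
  unfolding eval2_def by (rule is_ring_hom_comp[OF is_ring_hom_eval_x is_ring_hom_poly])

lemma is_ring_hom_subst_bipoly: "is_ring_hom (\<lambda>m. subst_bipoly m f)"
  unfolding subst_bipoly_def
  by (rule is_ring_hom_comp[OF is_ring_hom_map_poly[OF is_ring_hom_const2] is_ring_hom_poly])

lemma eval2_const2 [simp]: "eval2 (const2 c) a b = c"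
  by (simp add: eval2_def const2_def map_poly_pCons)

lemma eval2_subst_bipoly: "eval2 (subst_bipoly m f) a b = poly m (eval2 f a b)"
proof -
  have "eval2 (subst_bipoly m f) a b
      = poly (map_poly (\<lambda>h. eval2 h a b) (map_poly const2 m)) (eval2 f a b)"
    unfolding subst_bipoly_def by (rule is_ring_hom_poly_commute[OF is_ring_hom_eval2])
  also have "map_poly (\<lambda>h. eval2 h a b) (map_poly const2 m) = m"
    by (simp add: map_poly_map_poly o_def is_ring_hom_0[OF is_ring_hom_const2]
      is_ring_hom_0[OF is_ring_hom_eval2])
  finally show ?thesis .
qed

lemma eval2_eq_0_if_dvd: "a dvd b \<Longrightarrow> eval2 a x y = 0 \<Longrightarrow> eval2 b x y = 0"
  by (metis dvdE mult_zero_left is_ring_hom_mult[OF is_ring_hom_eval2])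

lemma subst_bipoly_linear: "subst_bipoly [:-c, 1:] f = f - const2 c"
  by (simp add: subst_bipoly_def map_poly_pCons const2_def pCons_one)

lemma subst_bipoly_const: "subst_bipoly [:c:] f = const2 c"
  by (simp add: subst_bipoly_def map_poly_pCons const2_def)

lemma const_x_smult: "const_x (smult c p) = const2 c * const_x p"
  using is_ring_hom_mult[OF is_ring_hom_const_x, of "[:c:]" p]
  by (simp add: map_poly_pCons const2_def)

lemma const_poly_smult: "[:smult c p:] = const2 c * [:p:]"
  by (simp add: const2_def)

lemma x_minus_dvd_sub_const_x_eval_x: "x_minus \<alpha> dvd h - const_x (eval_x \<alpha> h)"
proof -
  have "[:-\<alpha>, 1:] dvd coeff (h - const_x (eval_x \<alpha> h)) n" for n
    by (simp add: coeff_map_poly poly_eq_0_iff_dvd[symmetric])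
  then show ?thesis by (simp add: const_poly_dvd_iff)
qed

lemma x_minus_dvd_if_eval_x_eq_0: "eval_x \<alpha> h = 0 \<Longrightarrow> x_minus \<alpha> dvd h"
  using x_minus_dvd_sub_const_x_eval_x[of \<alpha> h] by simp

lemma x_minus_not_unit: "\<not> is_unit (x_minus \<alpha>)"
  by (simp add: is_unit_const_poly_iff is_unit_poly_iff)

lemma sub_eval2_in_ideal_of_point:
  "\<exists>k w. h - const2 (eval2 h \<alpha> \<beta>) = x_minus \<alpha> * k + const_x [:-\<beta>, 1:] * w"
proof -
  obtain k where k: "h - const_x (eval_x \<alpha> h) = x_minus \<alpha> * k"
    using x_minus_dvd_sub_const_x_eval_x by blast
  have "poly (eval_x \<alpha> h - [:eval2 h \<alpha> \<beta>:]) \<beta> = 0" by (simp add: eval2_def)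
  then obtain w where w: "eval_x \<alpha> h - [:eval2 h \<alpha> \<beta>:] = [:-\<beta>, 1:] * w"
    by (metis dvdE poly_eq_0_iff_dvd)
  have "const_x (eval_x \<alpha> h) - const2 (eval2 h \<alpha> \<beta>) = const_x (eval_x \<alpha> h - [:eval2 h \<alpha> \<beta>:])"
    by (simp add: is_ring_hom_diff[OF is_ring_hom_const_x] const2_def map_poly_pCons)
  also have "\<dots> = const_x [:-\<beta>, 1:] * const_x w"
    unfolding w by (rule is_ring_hom_mult[OF is_ring_hom_const_x])
  finally have "h - const2 (eval2 h \<alpha> \<beta>) = x_minus \<alpha> * k + const_x [:-\<beta>, 1:] * const_x w"
    using k by (simp add: algebra_simps)
  then show ?thesis by blast
qed

lemma eval2_nonunit_root:
  fixes \<pi> :: bipoly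
  assumes nz: "\<pi> \<noteq> 0" and nu: "\<not> is_unit \<pi>"
  obtains a b where "eval2 \<pi> a b = 0"
proof (cases "degree \<pi> = 0")
  case True
  then have \<pi>: "\<pi> = [:coeff \<pi> 0:]" by (simp add: degree_0_id)
  have "coeff \<pi> 0 \<noteq> 0" "\<not> is_unit (coeff \<pi> 0)"
    using nz nu \<pi> by (metis pCons_0_0, metis is_unit_const_poly_iff)
  then obtain a where "poly (coeff \<pi> 0) a = 0" by (rule complex_poly_nonunit_root)
  then have "eval2 \<pi> a 0 = 0" by (subst \<pi>) (simp add: eval2_def map_poly_pCons)
  then show ?thesis by (rule that)
next
  case False
  obtain a where a: "poly (lead_coeff \<pi>) a \<noteq> 0"
    using nz poly_all_0_iff_0 leading_coeff_0_iff by blast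
  then have "degree (eval_x a \<pi>) \<ge> degree \<pi>"
    by (intro le_degree) (simp add: coeff_map_poly)
  then obtain b where "poly (eval_x a \<pi>) b = 0"
    using False fundamental_theorem_of_algebra[of "eval_x a \<pi>"] by (auto simp: constant_degree)
  then show ?thesis using that unfolding eval2_def by blast
qed

lemma root_if_critical_value:
  assumes "in_gradient_ideal (subst_bipoly m f) f" and "critical_value f c"
  shows "poly m c = 0"
proof -
  obtain x y where xy: "eval2 (dx f) x y = 0" "eval2 (dy f) x y = 0" "eval2 f x y = c"
    using assms(2) unfolding critical_value_def by blast
  obtain a b where "subst_bipoly m f = a * dx f + b * dy f"
    using assms(1) unfolding in_gradient_ideal_def by blast
  then have "eval2 (subst_bipoly m f) x y = 0"
    using xy
    by (simp add: is_ring_hom_add[OF is_ring_hom_eval2] is_ring_hom_mult[OF is_ring_hom_eval2])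
  then show ?thesis using xy(3) by (simp add: eval2_subst_bipoly)
qed

lemma dx_add: "dx (a + b) = dx a + dx b"
  unfolding dx_def by (rule poly_eqI) (simp add: coeff_map_poly pderiv_add)

lemma dx_smult: "dx (smult c b) = smult (pderiv c) b + smult c (dx b)"
  unfolding dx_def by (rule poly_eqI) (simp add: coeff_map_poly pderiv_mult algebra_simps)

lemma dx_pCons: "dx (pCons c a) = pCons (pderiv c) (dx a)"
  unfolding dx_def by (simp add: map_poly_pCons)

lemma dx_const: "dx [:c:] = [:pderiv c:]"
  unfolding dx_def by (simp add: map_poly_pCons)

lemma dx_mult: "dx (a * b) = dx a * b + a * dx b"
proof (induction a)
  case 0
  then show ?case by (simp add: dx_def)
next
  case (pCons c a)
  have "dx (pCons c a * b) = dx (smult c b + pCons 0 (a * b))" by simp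
  also have "\<dots> = smult (pderiv c) b + smult c (dx b) + pCons 0 (dx a * b + a * dx b)"
    by (simp add: dx_add dx_smult dx_pCons pCons.IH)
  also have "\<dots> = dx (pCons c a) * b + pCons c a * dx b"
    by (simp add: dx_pCons algebra_simps)
  finally show ?case .
qed

lemma gradient_nonzero_if_nonconstant:
  fixes f :: bipoly
  assumes "\<nexists>c. f = const2 c"
  shows "dx f \<noteq> 0 \<or> dy f \<noteq> 0"
proof (rule ccontr)
  assume "\<not> (dx f \<noteq> 0 \<or> dy f \<noteq> 0)"
  then have x: "dx f = 0" and y: "pderiv f = 0" by (auto simp: dy_def)
  from y obtain p where f: "f = [:p:]" by (metis pderiv_eq_0_iff degree_eq_zeroE)
  with x have "pderiv p = 0" by (simp add: dx_const)
  then obtain a where "p = [:a:]" by (metis pderiv_eq_0_iff degree_eq_zeroE)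
  then show False using f assms unfolding const2_def by blast
qed

section \<open>The coprime part of the gradient\<close>

lemma const_x_gcd_eval_x_mem_ideal_insert:
  "const_x (gcd (eval_x \<alpha> p) (eval_x \<alpha> q)) \<in> ideal_insert (x_minus \<alpha>) (ideal_pair p q)"
proof -
  obtain u v where uv: "u * eval_x \<alpha> p + v * eval_x \<alpha> q = gcd (eval_x \<alpha> p) (eval_x \<alpha> q)"
    by (metis bezout_coefficients_fst_snd)
  have "\<exists>k. const_x (eval_x \<alpha> h) = h - x_minus \<alpha> * k" for h
  proof -
    obtain k where k: "h - const_x (eval_x \<alpha> h) = x_minus \<alpha> * k"
      using x_minus_dvd_sub_const_x_eval_x by (rule dvdE)
    have "const_x (eval_x \<alpha> h) = h - x_minus \<alpha> * k" unfolding k[symmetric] by simp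
    then show ?thesis ..
  qed
  then obtain k l where k: "const_x (eval_x \<alpha> p) = p - x_minus \<alpha> * k"
    and l: "const_x (eval_x \<alpha> q) = q - x_minus \<alpha> * l" by blast
  have "const_x (gcd (eval_x \<alpha> p) (eval_x \<alpha> q))
      = const_x u * const_x (eval_x \<alpha> p) + const_x v * const_x (eval_x \<alpha> q)"
    unfolding uv[symmetric]
    by (simp add: is_ring_hom_add[OF is_ring_hom_const_x] is_ring_hom_mult[OF is_ring_hom_const_x])
  also have "\<dots> = (const_x u * p + const_x v * q) + (- (const_x u * k + const_x v * l)) * x_minus \<alpha>"
    unfolding k l by (simp add: algebra_simps)
  finally show ?thesis unfolding ideal_insert_def ideal_pair_def by blast
qed

lemma fibre_product_mem_ideal_insert:
  fixes p q f :: bipoly and \<alpha> :: complex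
  defines "s \<equiv> gcd (eval_x \<alpha> p) (eval_x \<alpha> q)"
  assumes s0: "s \<noteq> 0"
  shows "(\<Prod>\<beta>\<in>#proots s. f - const2 (eval2 f \<alpha> \<beta>)) \<in> ideal_insert (x_minus \<alpha>) (ideal_pair p q)"
proof -
  define J where "J = ideal_insert (x_minus \<alpha>) (ideal_pair p q)"
  have J: "is_ideal J" unfolding J_def by (intro is_ideal_ideal_insert is_ideal_ideal_pair)
  have "f - const2 (eval2 f \<alpha> \<beta>) \<in> ideal_insert (const_x [:-\<beta>, 1:]) J" for \<beta>
  proof -
    obtain k w where kw: "f - const2 (eval2 f \<alpha> \<beta>) = x_minus \<alpha> * k + const_x [:-\<beta>, 1:] * w"
      using sub_eval2_in_ideal_of_point by blast
    have "k * x_minus \<alpha> \<in> J"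
      unfolding J_def by (rule multiple_mem_ideal_insert[OF is_ideal_ideal_pair])
    then show ?thesis unfolding kw ideal_insert_def by (auto simp: mult.commute)
  qed
  then have "(\<Prod>\<beta>\<in>#proots s. f - const2 (eval2 f \<alpha> \<beta>))
      \<in> ideal_insert (\<Prod>\<beta>\<in>#proots s. const_x [:-\<beta>, 1:]) J"
    by (rule prod_mset_mem_ideal_insert[OF J])
  moreover have "(\<Prod>\<beta>\<in>#proots s. const_x [:-\<beta>, 1:]) = const_x (\<Prod>\<beta>\<in>#proots s. [:-\<beta>, 1:])"
    by (rule is_ring_hom_prod_mset[OF is_ring_hom_const_x, symmetric])
  also have "\<dots> = const2 (inverse (lead_coeff s)) * const_x s"
    using s0 by (simp add: prod_proots_linear_factors const_x_smult)
  moreover have "const_x s \<in> J"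
    unfolding J_def s_def by (rule const_x_gcd_eval_x_mem_ideal_insert)
  ultimately show ?thesis
    using J ideal_insert_absorb is_ideal_mult unfolding J_def by metis
qed

lemma gcd_eval_x_nonzero_if_coprime:
  fixes p q :: bipoly
  assumes "coprime p q"
  shows "gcd (eval_x \<alpha> p) (eval_x \<alpha> q) \<noteq> 0"
proof
  assume "gcd (eval_x \<alpha> p) (eval_x \<alpha> q) = 0"
  then have "x_minus \<alpha> dvd p" "x_minus \<alpha> dvd q" by (auto intro: x_minus_dvd_if_eval_x_eq_0)
  then show False using coprime_common_divisor[OF assms] x_minus_not_unit by blast
qed

lemma eval2_eq_0_if_root_gcd_eval_x:
  assumes "poly (gcd (eval_x \<alpha> p) (eval_x \<alpha> q)) \<beta> = 0"
  shows "eval2 p \<alpha> \<beta> = 0" and "eval2 q \<alpha> \<beta> = 0"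
  using assms unfolding eval2_def by (auto simp: poly_eq_0_iff_dvd intro: dvd_trans)

lemma coprime_subst_bipoly_mem_ideal_pair:
  fixes p q f :: bipoly
  assumes cop: "coprime p q"
  obtains m where "subst_bipoly m f \<in> ideal_pair p q"
    and "\<And>c. poly m c = 0 \<Longrightarrow> \<exists>\<alpha> \<beta>. eval2 p \<alpha> \<beta> = 0 \<and> eval2 q \<alpha> \<beta> = 0 \<and> eval2 f \<alpha> \<beta> = c"
proof -
  define I where "I = ideal_pair p q"
  have I: "is_ideal I" unfolding I_def by (rule is_ideal_ideal_pair)
  have "p \<noteq> 0 \<or> q \<noteq> 0" using cop by auto
  moreover have "degree d = 0" if "d dvd p" "d dvd q" for d
    using coprime_common_divisor[OF cop that] by (auto simp: is_unit_poly_iff)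
  ultimately obtain r a b where r0: "r \<noteq> 0" and rab: "a * p + b * q = [:r:]"
    by (rule const_combination_if_no_common_factor)
  define s where "s \<alpha> = gcd (eval_x \<alpha> p) (eval_x \<alpha> q)" for \<alpha>
  have s0: "s \<alpha> \<noteq> 0" for \<alpha>
    unfolding s_def using cop by (rule gcd_eval_x_nonzero_if_coprime)
  define m where "m = (\<Prod>\<alpha>\<in>#proots r. \<Prod>\<beta>\<in>#proots (s \<alpha>). [:-eval2 f \<alpha> \<beta>, 1:])"
  have "subst_bipoly m f = (\<Prod>\<alpha>\<in>#proots r. \<Prod>\<beta>\<in>#proots (s \<alpha>). f - const2 (eval2 f \<alpha> \<beta>))"
    unfolding m_def
    by (simp add: is_ring_hom_prod_mset[OF is_ring_hom_subst_bipoly] subst_bipoly_linear)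
  also have "\<dots> \<in> ideal_insert (\<Prod>\<alpha>\<in>#proots r. x_minus \<alpha>) I"
    using s0 unfolding I_def s_def
    by (intro prod_mset_mem_ideal_insert is_ideal_ideal_pair fibre_product_mem_ideal_insert)
  finally have "subst_bipoly m f \<in> ideal_insert (\<Prod>\<alpha>\<in>#proots r. x_minus \<alpha>) I" .
  moreover have "(\<Prod>\<alpha>\<in>#proots r. x_minus \<alpha>) = [:\<Prod>\<alpha>\<in>#proots r. [:-\<alpha>, 1:]:]"
    by (rule is_ring_hom_prod_mset[OF is_ring_hom_const_poly, symmetric])
  also have "\<dots> = const2 (inverse (lead_coeff r)) * [:r:]"
    using r0 by (simp add: prod_proots_linear_factors const_poly_smult)
  moreover have "[:r:] \<in> I" unfolding I_def ideal_pair_def using rab[symmetric] by blast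
  ultimately have "subst_bipoly m f \<in> I" using I ideal_insert_absorb is_ideal_mult by metis
  moreover have "\<exists>\<alpha> \<beta>. eval2 p \<alpha> \<beta> = 0 \<and> eval2 q \<alpha> \<beta> = 0 \<and> eval2 f \<alpha> \<beta> = c"
    if "poly m c = 0" for c
  proof -
    from that obtain \<alpha> \<beta> where "\<beta> \<in># proots (s \<alpha>)" and c: "c = eval2 f \<alpha> \<beta>"
      unfolding m_def by (auto simp: poly_prod_mset)
    then have "poly (s \<alpha>) \<beta> = 0" using s0[of \<alpha>] by simp
    then show ?thesis using c eval2_eq_0_if_root_gcd_eval_x unfolding s_def by blast
  qed
  ultimately show ?thesis using that unfolding I_def by blast
qed

section \<open>Prime factors of the common part of the gradient\<close>

text \<open>A polynomial \<open>Q \<in> \<complex>[x][t]\<close> gives the bivariate polynomial \<open>Q(x, f(x, y))\<close>.\<close>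

definition subst_t :: "bipoly \<Rightarrow> complex poly poly \<Rightarrow> bipoly" where
  "subst_t f Q = poly (map_poly (\<lambda>c. [:c:]) Q) f"

lemma is_ring_hom_subst_t: "is_ring_hom (subst_t f)"
  unfolding subst_t_def
  by (rule is_ring_hom_comp[OF is_ring_hom_map_poly[OF is_ring_hom_const_poly] is_ring_hom_poly])

lemma subst_t_pCons: "subst_t f (pCons a Q) = [:a:] + f * subst_t f Q"
  by (simp add: subst_t_def map_poly_pCons)

lemma subst_t_const: "subst_t f [:a:] = [:a:]"
  by (simp add: subst_t_def map_poly_pCons)

lemma subst_t_const_coeffs: "subst_t f (map_poly (\<lambda>c. [:c:]) P) = subst_bipoly P f"
proof -
  have "const2 = (\<lambda>c. [:[:c:]:])" by (simp add: fun_eq_iff const2_def)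
  then show ?thesis by (simp add: subst_t_def subst_bipoly_def map_poly_map_poly o_def)
qed

lemma pderiv_subst_t: "pderiv (subst_t f Q) = subst_t f (pderiv Q) * pderiv f"
proof (induction Q)
  case 0
  then show ?case by (simp add: subst_t_def)
next
  case (pCons a Q)
  have "pderiv (subst_t f (pCons a Q)) = f * pderiv (subst_t f Q) + subst_t f Q * pderiv f"
    by (simp add: subst_t_pCons pderiv_add pderiv_mult)
  also have "\<dots> = subst_t f (pderiv (pCons a Q)) * pderiv f"
    by (simp add: pCons.IH pderiv_pCons is_ring_hom_add[OF is_ring_hom_subst_t] subst_t_pCons
        algebra_simps)
  finally show ?case .
qed

lemma dx_subst_t: "dx (subst_t f Q) = subst_t f (pderiv Q) * dx f + subst_t f (map_poly pderiv Q)"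
proof (induction Q)
  case 0
  then show ?case by (simp add: subst_t_def dx_def)
next
  case (pCons a Q)
  have "dx (subst_t f (pCons a Q)) = [:pderiv a:] + dx f * subst_t f Q + f * dx (subst_t f Q)"
    by (simp add: subst_t_pCons dx_add dx_mult dx_const)
  also have "\<dots> = subst_t f (pderiv (pCons a Q)) * dx f + subst_t f (map_poly pderiv (pCons a Q))"
    by (simp add: pCons.IH pderiv_pCons is_ring_hom_add[OF is_ring_hom_subst_t] subst_t_pCons
        map_poly_pCons algebra_simps)
  finally show ?case .
qed

lemma prime_dvd_subst_t_map_pderiv:
  fixes \<pi> f :: bipoly
  assumes pr: "prime_elem \<pi>" and deg: "degree \<pi> > 0"
    and fx: "\<pi> dvd dx f" and fy: "\<pi> dvd dy f" and dvd: "\<pi> dvd subst_t f Q"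
  shows "\<pi> dvd subst_t f (map_poly pderiv Q)"
proof -
  \<comment> \<open>The derivation \<open>D\<close> along the curve \<open>\<pi> = 0\<close> preserves multiples of \<open>\<pi>\<close>
    and, modulo \<open>\<pi>\<close>, kills \<open>f\<close>.\<close>
  define D where "D h = pderiv \<pi> * dx h - dx \<pi> * pderiv h" for h
  obtain h where h: "subst_t f Q = \<pi> * h" using dvd by blast
  have "D (\<pi> * h) = \<pi> * D h"
    unfolding D_def by (simp add: dx_mult pderiv_mult algebra_simps)
  then have "\<pi> dvd D (subst_t f Q)" using h by simp
  moreover have "D (subst_t f Q) = subst_t f (pderiv Q) * (pderiv \<pi> * dx f - dx \<pi> * pderiv f)
      + pderiv \<pi> * subst_t f (map_poly pderiv Q)"
    unfolding D_def by (simp add: dx_subst_t pderiv_subst_t algebra_simps)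
  moreover have "\<pi> dvd subst_t f (pderiv Q) * (pderiv \<pi> * dx f - dx \<pi> * pderiv f)"
    using fx fy unfolding dy_def by (intro dvd_mult dvd_diff) auto
  ultimately have "\<pi> dvd pderiv \<pi> * subst_t f (map_poly pderiv Q)"
    by (metis dvd_add_right_iff)
  moreover have "\<not> \<pi> dvd pderiv \<pi>" using deg by simp
  ultimately show ?thesis using pr prime_elem_dvd_mult_iff by blast
qed

lemma prime_dvd_subst_t_imp_dvd_subst_bipoly:
  fixes \<pi> f :: bipoly
  assumes pr: "prime_elem \<pi>" and deg: "degree \<pi> > 0"
    and fx: "\<pi> dvd dx f" and fy: "\<pi> dvd dy f"
  shows "Q \<noteq> 0 \<Longrightarrow> \<pi> dvd subst_t f Q \<Longrightarrow> \<exists>P. P \<noteq> 0 \<and> \<pi> dvd subst_bipoly P f"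
proof (induction "\<Sum>i\<le>degree Q. degree (coeff Q i)" arbitrary: Q rule: less_induct)
  case less
  show ?case
  proof (cases "\<forall>i\<le>degree Q. degree (coeff Q i) = 0")
    case True
    define P where "P = map_poly (\<lambda>c. coeff c 0) Q"
    have "Q = map_poly (\<lambda>c. [:c:]) P"
    proof (rule poly_eqI)
      fix n
      show "coeff Q n = coeff (map_poly (\<lambda>c. [:c:]) P) n"
        using True
        by (cases "n \<le> degree Q") (auto simp: P_def coeff_map_poly degree_0_id coeff_eq_0)
    qed
    then show ?thesis using less.prems by (metis map_poly_0 subst_t_const_coeffs)
  next
    case False
    then obtain i where i: "i \<le> degree Q" "degree (coeff Q i) > 0" by auto
    define Q' where "Q' = map_poly pderiv Q"
    have cQ': "coeff Q' n = pderiv (coeff Q n)" for n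
      unfolding Q'_def by (simp add: coeff_map_poly)
    have dvd': "\<pi> dvd subst_t f Q'"
      unfolding Q'_def by (rule prime_dvd_subst_t_map_pderiv[OF pr deg fx fy less.prems(2)])
    have "Q' \<noteq> 0"
      using i cQ'[of i] by (auto simp: pderiv_eq_0_iff)
    have "degree Q' \<le> degree Q" unfolding Q'_def by (rule map_poly_degree_leq)
    then have "(\<Sum>i\<le>degree Q'. degree (coeff Q' i)) = (\<Sum>i\<le>degree Q. degree (coeff Q' i))"
      by (intro sum.mono_neutral_left) (auto simp: coeff_eq_0)
    also have "\<dots> < (\<Sum>i\<le>degree Q. degree (coeff Q i))"
      using i by (intro sum_strict_mono_ex1) (auto simp: cQ' degree_pderiv intro!: bexI[of _ i])
    finally show ?thesis using less.hyps \<open>Q' \<noteq> 0\<close> dvd' by blast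
  qed
qed

lemma prime_dvd_subst_bipoly_imp_dvd_sub_const:
  fixes \<pi> f :: bipoly
  assumes pr: "prime_elem \<pi>" and P0: "P \<noteq> 0" and dvd: "\<pi> dvd subst_bipoly P f"
  obtains c where "\<pi> dvd f - const2 c"
proof -
  have "P = [:lead_coeff P:] * (\<Prod>x\<in>#proots P. [:-x, 1:])"
    using complex_poly_decompose_multiset[of P] by simp
  then have "subst_bipoly P f = subst_bipoly ([:lead_coeff P:] * (\<Prod>x\<in>#proots P. [:-x, 1:])) f"
    by (rule arg_cong)
  also have "\<dots> = const2 (lead_coeff P) * (\<Prod>x\<in>#proots P. f - const2 x)"
    by (simp only: is_ring_hom_mult[OF is_ring_hom_subst_bipoly]
        is_ring_hom_prod_mset[OF is_ring_hom_subst_bipoly] subst_bipoly_const subst_bipoly_linear)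
  finally have "subst_bipoly P f = const2 (lead_coeff P) * (\<Prod>x\<in>#proots P. f - const2 x)" .
  moreover have "\<not> \<pi> dvd const2 (lead_coeff P)"
  proof
    assume "\<pi> dvd const2 (lead_coeff P)"
    moreover have "is_unit (const2 (lead_coeff P))"
      using P0 by (simp add: const2_def is_unit_const_poly_iff dvd_field_iff)
    ultimately show False using pr dvd_unit_imp_unit prime_elem_not_unit by blast
  qed
  ultimately have "\<pi> dvd (\<Prod>x\<in>#proots P. f - const2 x)"
    using dvd pr prime_elem_dvd_mult_iff by metis
  then obtain a where "a \<in># image_mset (\<lambda>x. f - const2 x) (proots P)" "\<pi> dvd a"
    by (rule prime_elem_dvd_prod_msetE[OF pr])
  then show ?thesis using that by auto
qed

lemma prime_dvd_dy_imp_dvd_sub_const_degree_0: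
  fixes \<pi> f :: bipoly
  assumes pr: "prime_elem \<pi>" and deg: "degree \<pi> = 0" and fy: "\<pi> dvd dy f"
  shows "\<exists>c. \<pi> dvd f - const2 c"
proof -
  have \<pi>: "\<pi> = [:coeff \<pi> 0:]" using deg by (simp add: degree_0_id)
  have "coeff \<pi> 0 \<noteq> 0" "\<not> is_unit (coeff \<pi> 0)"
    using pr \<pi> by (metis pCons_0_0 prime_elem_def, metis is_unit_const_poly_iff prime_elem_not_unit)
  then obtain \<alpha> where "poly (coeff \<pi> 0) \<alpha> = 0" by (rule complex_poly_nonunit_root)
  then have X\<pi>: "x_minus \<alpha> dvd \<pi>" by (subst \<pi>) (simp add: poly_eq_0_iff_dvd)
  then have "\<pi> dvd x_minus \<alpha>"
    using irreducibleD'[OF prime_elem_imp_irreducible[OF pr]] x_minus_not_unit by blast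
  \<comment> \<open>\<open>\<pi>\<close> is associated to \<open>x - \<alpha>\<close>, and \<open>f\<^sub>y(\<alpha>, y) = 0\<close> makes \<open>f(\<alpha>, y)\<close> a constant \<open>c\<close>.\<close>
  have "eval_x \<alpha> (x_minus \<alpha>) dvd eval_x \<alpha> (pderiv f)"
    using X\<pi> fy unfolding dy_def by (intro is_ring_hom_dvd[OF is_ring_hom_eval_x]) (rule dvd_trans)
  then have "pderiv (eval_x \<alpha> f) = 0"
    by (simp add: map_poly_pCons is_ring_hom_pderiv_commute[OF is_ring_hom_poly])
  then have "degree (eval_x \<alpha> f) = 0" by (simp add: pderiv_eq_0_iff)
  then obtain c where "eval_x \<alpha> f = [:c:]" by (meson degree_eq_zeroE)
  moreover have "eval_x \<alpha> (const2 c) = [:c:]" by (simp add: const2_def map_poly_pCons)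
  ultimately have "eval_x \<alpha> (f - const2 c) = 0"
    by (simp add: is_ring_hom_diff[OF is_ring_hom_eval_x])
  then have "x_minus \<alpha> dvd f - const2 c" by (rule x_minus_dvd_if_eval_x_eq_0)
  with \<open>\<pi> dvd x_minus \<alpha>\<close> show ?thesis by (meson dvd_trans)
qed

lemma nonzero_at_some_const:
  fixes l :: "complex poly poly"
  assumes "l \<noteq> 0"
  obtains c where "poly l [:c:] \<noteq> 0"
proof -
  obtain i where "coeff l i \<noteq> 0" using assms by (metis leading_coeff_0_iff)
  then obtain x where x: "poly (coeff l i) x \<noteq> 0" using poly_all_0_iff_0 by blast
  define l' where "l' = map_poly (\<lambda>e. poly e x) l"
  have "coeff l' i \<noteq> 0" unfolding l'_def using x by (simp add: coeff_map_poly)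
  then obtain c where c: "poly l' c \<noteq> 0" using poly_all_0_iff_0 by (metis coeff_0)
  have "poly (poly l [:c:]) x = poly l' c"
    unfolding l'_def using is_ring_hom_poly_commute[OF is_ring_hom_poly, of l "[:c:]" x] by simp
  then show ?thesis using that c by (metis poly_0)
qed

lemma degree_eq_0_if_specializations:
  fixes d :: "complex poly poly poly"
  assumes "\<And>c. degree (map_poly (\<lambda>e. poly e [:c:]) d) = 0"
  shows "degree d = 0"
proof (rule ccontr)
  assume "degree d \<noteq> 0"
  then have "lead_coeff d \<noteq> 0" by auto
  then obtain c where "poly (lead_coeff d) [:c:] \<noteq> 0" by (rule nonzero_at_some_const)
  then have "degree (map_poly (\<lambda>e. poly e [:c:]) d) \<ge> degree d"
    by (intro le_degree) (simp add: coeff_map_poly)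
  then show False using assms[of c] \<open>degree d \<noteq> 0\<close> by simp
qed

lemma lifted_common_divisor_degree_0:
  fixes \<pi> f :: bipoly and d :: "complex poly poly poly"
  assumes pr: "prime_elem \<pi>" and nc: "\<And>c. \<not> \<pi> dvd f - const2 c"
    and d\<pi>: "d dvd map_poly (\<lambda>c. [:c:]) \<pi>"
    and df: "d dvd map_poly (\<lambda>c. [:c:]) f - [:[:0, 1:]:]"
  shows "degree d = 0"
proof (rule degree_eq_0_if_specializations)
  fix c
  define \<Psi> where "\<Psi> = map_poly (\<lambda>e::complex poly poly. poly e [:c:])"
  have \<Psi>: "is_ring_hom \<Psi>" unfolding \<Psi>_def by (rule is_ring_hom_map_poly[OF is_ring_hom_poly])
  have \<Psi>_lift: "\<Psi> (map_poly (\<lambda>c. [:c:]) h) = h" for h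
    by (simp add: \<Psi>_def map_poly_map_poly o_def)
  have "\<Psi> d dvd \<pi>" using is_ring_hom_dvd[OF \<Psi> d\<pi>] \<Psi>_lift by simp
  moreover have "\<Psi> [:[:0, 1:]:] = const2 c" by (simp add: \<Psi>_def map_poly_pCons const2_def)
  then have "\<Psi> d dvd f - const2 c"
    using is_ring_hom_dvd[OF \<Psi> df] \<Psi>_lift by (simp add: is_ring_hom_diff[OF \<Psi>])
  ultimately have "is_unit (\<Psi> d)"
    using irreducibleD'[OF prime_elem_imp_irreducible[OF pr]] nc dvd_trans by metis
  then show "degree (map_poly (\<lambda>e. poly e [:c:]) d) = 0"
    unfolding \<Psi>_def by (auto simp: is_unit_poly_iff)
qed

lemma prime_dvd_gradient_imp_dvd_sub_const_degree_pos:
  fixes \<pi> f :: bipoly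
  assumes pr: "prime_elem \<pi>" and deg: "degree \<pi> > 0"
    and fx: "\<pi> dvd dx f" and fy: "\<pi> dvd dy f"
  shows "\<exists>c. \<pi> dvd f - const2 c"
proof (rule ccontr)
  assume nc: "\<nexists>c. \<pi> dvd f - const2 c"
  define lift :: "bipoly \<Rightarrow> complex poly poly poly" where "lift = map_poly (\<lambda>c. [:c:])"
  \<comment> \<open>\<open>\<pi>\<close> and \<open>f - t\<close>, as polynomials in \<open>y\<close> over \<open>\<complex>[x, t]\<close>, have no common factor.\<close>
  have "lift \<pi> \<noteq> 0" using pr by (auto simp: lift_def map_poly_eq_0_iff)
  moreover have "degree d = 0" if "d dvd lift \<pi>" "d dvd lift f - [:[:0, 1:]:]" for d
    using lifted_common_divisor_degree_0[OF pr] nc that unfolding lift_def by blast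
  ultimately obtain r A B where r0: "r \<noteq> 0"
    and rAB: "A * lift \<pi> + B * (lift f - [:[:0, 1:]:]) = [:r:]"
    by (metis const_combination_if_no_common_factor)
  define \<Phi> where "\<Phi> h = poly (map_poly (subst_t f) h) [:0, 1:]" for h
  have \<Phi>: "is_ring_hom \<Phi>"
    unfolding \<Phi>_def
    by (rule is_ring_hom_comp[OF is_ring_hom_map_poly[OF is_ring_hom_subst_t] is_ring_hom_poly])
  have \<Phi>_lift: "\<Phi> (lift h) = h" for h
    by (simp add: \<Phi>_def lift_def map_poly_map_poly o_def is_ring_hom_0[OF is_ring_hom_subst_t]
        subst_t_const pcompose_altdef[symmetric])
  have "\<Phi> [:[:0, 1:]:] = f" by (simp add: \<Phi>_def map_poly_pCons subst_t_pCons subst_t_def)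
  moreover have "\<Phi> [:r:] = subst_t f r"
    by (simp add: \<Phi>_def map_poly_pCons is_ring_hom_0[OF is_ring_hom_subst_t])
  ultimately have "subst_t f r = \<Phi> A * \<pi>"
    using arg_cong[OF rAB, of \<Phi>] \<Phi>_lift
    by (simp add: is_ring_hom_add[OF \<Phi>] is_ring_hom_mult[OF \<Phi>] is_ring_hom_diff[OF \<Phi>])
  then have "\<pi> dvd subst_t f r" by simp
  then obtain P where "P \<noteq> 0" "\<pi> dvd subst_bipoly P f"
    using prime_dvd_subst_t_imp_dvd_subst_bipoly[OF pr deg fx fy] r0 by blast
  then show False using prime_dvd_subst_bipoly_imp_dvd_sub_const[OF pr] nc by metis
qed

lemma prime_dvd_gradient_imp_dvd_sub_const:
  fixes \<pi> f :: bipoly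
  assumes "prime_elem \<pi>" and "\<pi> dvd dx f" and "\<pi> dvd dy f"
  shows "\<exists>c. \<pi> dvd f - const2 c"
  using assms prime_dvd_dy_imp_dvd_sub_const_degree_0
    prime_dvd_gradient_imp_dvd_sub_const_degree_pos
  by blast

lemma common_divisor_gradient_dvd_subst_bipoly:
  fixes f g :: bipoly
  assumes g0: "g \<noteq> 0" and gx: "g dvd dx f" and gy: "g dvd dy f"
  obtains m where "g dvd subst_bipoly m f" and "\<And>c. poly m c = 0 \<Longrightarrow> critical_value f c"
proof -
  define PF where "PF = prime_factorization g"
  have PF: "prime_elem \<pi> \<and> \<pi> dvd dx f \<and> \<pi> dvd dy f" if "\<pi> \<in># PF" for \<pi>
    using that gx gy unfolding PF_def
    by (meson dvd_trans in_prime_factors_imp_dvd in_prime_factors_imp_prime prime_imp_prime_elem)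
  then have "\<forall>\<pi>\<in>#PF. \<exists>c. \<pi> dvd f - const2 c"
    using prime_dvd_gradient_imp_dvd_sub_const by blast
  then obtain c where c: "\<And>\<pi>. \<pi> \<in># PF \<Longrightarrow> \<pi> dvd f - const2 (c \<pi>)"
    by (metis bchoice)
  define m where "m = (\<Prod>\<pi>\<in>#PF. [:-c \<pi>, 1:])"
  have "normalize (\<Prod>\<pi>\<in>#PF. \<pi>) = normalize g"
    unfolding PF_def using g0 by (simp add: prod_mset_prime_factorization_weak)
  then have "g dvd (\<Prod>\<pi>\<in>#PF. \<pi>)" by (metis dvd_normalize_iff dvd_refl)
  also have "\<dots> dvd (\<Prod>\<pi>\<in>#PF. f - const2 (c \<pi>))"
    using c by (rule prod_mset_dvd_prod_mset_pointwise)
  also have "\<dots> = subst_bipoly m f"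
    unfolding m_def
    by (simp only: is_ring_hom_prod_mset[OF is_ring_hom_subst_bipoly] subst_bipoly_linear)
  finally have "g dvd subst_bipoly m f" .
  moreover have "critical_value f z" if "poly m z = 0" for z
  proof -
    obtain \<pi> where \<pi>: "\<pi> \<in># PF" and z: "z = c \<pi>"
      using \<open>poly m z = 0\<close> unfolding m_def by (auto simp: poly_prod_mset prod_mset_zero_iff)
    have "\<pi> \<noteq> 0" "\<not> is_unit \<pi>" using PF[OF \<pi>] by (auto simp: prime_elem_not_unit)
    then obtain x y where xy: "eval2 \<pi> x y = 0" by (rule eval2_nonunit_root)
    have "eval2 f x y = z"
      using eval2_eq_0_if_dvd[OF c[OF \<pi>] xy] z by (simp add: is_ring_hom_diff[OF is_ring_hom_eval2])
    moreover have "eval2 (dx f) x y = 0" "eval2 (dy f) x y = 0"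
      using PF[OF \<pi>] eval2_eq_0_if_dvd xy by blast+
    ultimately show ?thesis unfolding critical_value_def by blast
  qed
  ultimately show ?thesis using that by blast
qed

lemma in_gradient_ideal_mult:
  assumes fx: "dx f = g * p" and fy: "dy f = g * q"
    and "h \<in> ideal_pair p q" and "g dvd k"
  shows "in_gradient_ideal (h * k) f"
proof -
  obtain a b l where "h = a * p + b * q" and "k = g * l"
    using assms(3,4) unfolding ideal_pair_def by blast
  then have "h * k = (a * l) * dx f + (b * l) * dy f" by (simp add: fx fy algebra_simps)
  then show ?thesis unfolding in_gradient_ideal_def by blast
qed

theorem proposition1:
  fixes f :: bipoly
  assumes "\<nexists>c. f = const2 c"
  shows "\<exists>m :: complex poly.
           in_gradient_ideal (subst_bipoly m f) f \<and>
           (\<forall>c. poly m c = 0 \<longleftrightarrow> critical_value f c)"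
proof -
  define g where "g = gcd (dx f) (dy f)"
  define p q where "p = dx f div g" and "q = dy f div g"
  have "dx f \<noteq> 0 \<or> dy f \<noteq> 0" using assms by (rule gradient_nonzero_if_nonconstant)
  then have g0: "g \<noteq> 0" and "coprime p q"
    unfolding g_def p_def q_def by (auto intro: div_gcd_coprime)
  have fx: "dx f = g * p" and fy: "dy f = g * q" unfolding g_def p_def q_def by simp_all
  obtain m0 where m0: "subst_bipoly m0 f \<in> ideal_pair p q"
    and roots0: "\<And>c. poly m0 c = 0 \<Longrightarrow> \<exists>\<alpha> \<beta>. eval2 p \<alpha> \<beta> = 0 \<and> eval2 q \<alpha> \<beta> = 0 \<and> eval2 f \<alpha> \<beta> = c"
    using coprime_subst_bipoly_mem_ideal_pair[OF \<open>coprime p q\<close>, where f = f] by blast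
  obtain m1 where m1: "g dvd subst_bipoly m1 f" and roots1: "\<And>c. poly m1 c = 0 \<Longrightarrow> critical_value f c"
    using g0 fx fy by (metis dvd_triv_left common_divisor_gradient_dvd_subst_bipoly)
  have ideal: "in_gradient_ideal (subst_bipoly (m0 * m1) f) f"
    using in_gradient_ideal_mult[OF fx fy m0 m1]
    by (simp add: is_ring_hom_mult[OF is_ring_hom_subst_bipoly])
  have "critical_value f c" if "poly m0 c = 0" for c
    using roots0[OF that] unfolding critical_value_def fx fy
    by (auto simp: is_ring_hom_mult[OF is_ring_hom_eval2])
  then have "poly (m0 * m1) c = 0 \<Longrightarrow> critical_value f c" for c
    using roots1 by auto
  then show ?thesis using ideal root_if_critical_value by blast
qed

end
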